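(* Fix $\tau>0$, and assume that for every $\lambda\in\Lambda$ the problem $\max_{\pi\in\Pi}\mathcal L_\tau(\pi,\lambda)$ has exactly one maximizer $\pi^*_{\tau,\lambda}$. Assume the CMDP has an optimal policy $\pi^*$ with optimal value $V_0^*(\rho)=V_0^{\pi^*}(\rho)$. Let $\lambda\in\Lambda$. Then $$V_0^*(\rho)-V_0^{\pi^*_{\tau,\lambda}}(\rho)\le\langle\lambda,\nabla d_\tau(\lambda)\rangle+\tau\mathcal H(\pi^*_{\tau,\lambda}),$$ $$\bigl\|[c-V^{\pi^*_{\tau,\lambda}}(\rho)]_+\bigr\|_2=\bigl\|[-\nabla d_\tau(\lambda)]_+\bigr\|_2.$$
   Context: Finite MDP with state space $\mathcal S$, action space $\mathcal A$, transition kernel $\mathrm P$, discount $\gamma\in(0,1)$, initial distribution $\rho$, positive finite rewards $r_0,\dots,r_m$, $r_{0,\max}=\max_{s,a}r_0(s,a)$. $\Pi$ = stationary policies. $V_i^\pi(\rho)=\mathbb{E}[\sum_{t\ge0}\gamma^tr_i(s_t,a_t)]$ with $s_0\sim\rho$, $a_t\sim\pi(\cdot\mid s_t)$, $s_{t+1}\sim\mathrm P(\cdot\mid s_t,a_t)$; $V^\pi(\rho)=(V_1^\pi(\rho),\dots,V_m^\pi(\rho))^\top$; thresholds $c\in\mathbb{R}^m$. The CMDP is $\max_{\pi\in\Pi}V_0^\pi(\rho)$ s.t. $V_i^\pi(\rho)\ge c_i$, $i=1,\dots,m$. Discounted entropy $\mathcal H(\pi)=-\mathbb{E}[\sum_t\gamma^t\log\pi(a_t\mid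 s_t)]$. $\mathcal L_\tau(\pi,\lambda)=V_0^\pi(\rho)+\langle\lambda,V^\pi(\rho)-c\rangle+\tau\mathcal H(\pi)$, $d_\tau(\lambda)=\max_{\pi\in\Pi}\mathcal L_\tau(\pi,\lambda)$ (which is differentiable on $\Lambda$ under the uniqueness hypothesis). $[x]_+$ is the componentwise positive part. For a Slater constant $\xi>0$ (i.e. some $\pi_\xi$ has $V_i^{\pi_\xi}(\rho)\ge c_i+\xi$ for all $i$), $B_\lambda=\frac{r_{0,\max}+\log|\mathcal A|}{(1-\gamma)\xi}$ and $\Lambda=\{\lambda\in\mathbb{R}^m_+:\|\lambda\|_1\le B_\lambda\}$. *)

theory Defs
  imports "HOL-Analysis.Analysis"
begin

text \<open>Finite MDP: states 's, actions 'a (finite types). Transition kernel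
  P s a s' = probability of s' given (s,a). Policies p s a = p(a|s).\<close>

definition is_dist :: "('x::finite \<Rightarrow> real) \<Rightarrow> bool" where
  "is_dist p \<longleftrightarrow> (\<forall>x. 0 \<le> p x) \<and> (\<Sum>x\<in>UNIV. p x) = 1"

definition policies :: "('s::finite \<Rightarrow> 'a::finite \<Rightarrow> real) set" where
  "policies = {p. \<forall>s. is_dist (p s)}"

primrec sdist :: "('s::finite \<Rightarrow> 'a::finite \<Rightarrow> 's \<Rightarrow> real) \<Rightarrow> ('s \<Rightarrow> real)
    \<Rightarrow> ('s \<Rightarrow> 'a \<Rightarrow> real) \<Rightarrow> nat \<Rightarrow> 's \<Rightarrow> real" where
  "sdist P rho p 0 = rho"
| "sdist P rho p (Suc t) = (\<lambda>s'. \<Sum>s\<in>UNIV. \<Sum>a\<in>UNIV. sdist P rho p t s * p s a * P s a s')"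

definition Vf :: "('s::finite \<Rightarrow> 'a::finite \<Rightarrow> 's \<Rightarrow> real) \<Rightarrow> ('s \<Rightarrow> real) \<Rightarrow> real
    \<Rightarrow> ('s \<Rightarrow> 'a \<Rightarrow> real) \<Rightarrow> ('s \<Rightarrow> 'a \<Rightarrow> real) \<Rightarrow> real" where
  "Vf P rho \<gamma> p f = (\<Sum>t. \<gamma> ^ t * (\<Sum>s\<in>UNIV. \<Sum>a\<in>UNIV. sdist P rho p t s * p s a * f s a))"

definition Vvec :: "('s::finite \<Rightarrow> 'a::finite \<Rightarrow> 's \<Rightarrow> real) \<Rightarrow> ('s \<Rightarrow> real) \<Rightarrow> real
    \<Rightarrow> ('m::finite \<Rightarrow> 's \<Rightarrow> 'a \<Rightarrow> real) \<Rightarrow> ('s \<Rightarrow> 'a \<Rightarrow> real) \<Rightarrow> real ^ 'm" where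
  "Vvec P rho \<gamma> r p = (\<chi> i. Vf P rho \<gamma> p (r i))"

definition entropy :: "('s::finite \<Rightarrow> 'a::finite \<Rightarrow> 's \<Rightarrow> real) \<Rightarrow> ('s \<Rightarrow> real) \<Rightarrow> real
    \<Rightarrow> ('s \<Rightarrow> 'a \<Rightarrow> real) \<Rightarrow> real" where
  "entropy P rho \<gamma> p =
     - (\<Sum>t. \<gamma> ^ t * (\<Sum>s\<in>UNIV. \<Sum>a\<in>UNIV. sdist P rho p t s * p s a * ln (p s a)))"

definition Lagr :: "('s::finite \<Rightarrow> 'a::finite \<Rightarrow> 's \<Rightarrow> real) \<Rightarrow> ('s \<Rightarrow> real) \<Rightarrow> real
    \<Rightarrow> ('s \<Rightarrow> 'a \<Rightarrow> real) \<Rightarrow> ('m::finite \<Rightarrow> 's \<Rightarrow> 'a \<Rightarrow> real) \<Rightarrow> real ^ 'm \<Rightarrow> real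
    \<Rightarrow> ('s \<Rightarrow> 'a \<Rightarrow> real) \<Rightarrow> real ^ 'm \<Rightarrow> real" where
  "Lagr P rho \<gamma> r0 r c \<tau> p lam =
     Vf P rho \<gamma> p r0 + lam \<bullet> (Vvec P rho \<gamma> r p - c) + \<tau> * entropy P rho \<gamma> p"

definition dual :: "('s::finite \<Rightarrow> 'a::finite \<Rightarrow> 's \<Rightarrow> real) \<Rightarrow> ('s \<Rightarrow> real) \<Rightarrow> real
    \<Rightarrow> ('s \<Rightarrow> 'a \<Rightarrow> real) \<Rightarrow> ('m::finite \<Rightarrow> 's \<Rightarrow> 'a \<Rightarrow> real) \<Rightarrow> real ^ 'm \<Rightarrow> real
    \<Rightarrow> real ^ 'm \<Rightarrow> real" where
  "dual P rho \<gamma> r0 r c \<tau> lam = (SUP p\<in>policies. Lagr P rho \<gamma> r0 r c \<tau> p lam)"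

definition is_Lmax :: "('s::finite \<Rightarrow> 'a::finite \<Rightarrow> 's \<Rightarrow> real) \<Rightarrow> ('s \<Rightarrow> real) \<Rightarrow> real
    \<Rightarrow> ('s \<Rightarrow> 'a \<Rightarrow> real) \<Rightarrow> ('m::finite \<Rightarrow> 's \<Rightarrow> 'a \<Rightarrow> real) \<Rightarrow> real ^ 'm \<Rightarrow> real
    \<Rightarrow> real ^ 'm \<Rightarrow> ('s \<Rightarrow> 'a \<Rightarrow> real) \<Rightarrow> bool" where
  "is_Lmax P rho \<gamma> r0 r c \<tau> lam p \<longleftrightarrow> p \<in> policies \<and>
     (\<forall>p'\<in>policies. Lagr P rho \<gamma> r0 r c \<tau> p' lam \<le> Lagr P rho \<gamma> r0 r c \<tau> p lam)"

definition feasible :: "('s::finite \<Rightarrow> 'a::finite \<Rightarrow> 's \<Rightarrow> real) \<Rightarrow> ('s \<Rightarrow> real) \<Rightarrow> real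
    \<Rightarrow> ('m::finite \<Rightarrow> 's \<Rightarrow> 'a \<Rightarrow> real) \<Rightarrow> real ^ 'm \<Rightarrow> ('s \<Rightarrow> 'a \<Rightarrow> real) \<Rightarrow> bool" where
  "feasible P rho \<gamma> r c p \<longleftrightarrow> p \<in> policies \<and> (\<forall>i. Vvec P rho \<gamma> r p $ i \<ge> c $ i)"

definition Lam :: "real \<Rightarrow> real \<Rightarrow> real \<Rightarrow> real \<Rightarrow> (real ^ 'm::finite) set" where
  "Lam r0max nA \<gamma> \<xi> =
     {lam. (\<forall>i. 0 \<le> lam $ i) \<and> (\<Sum>i\<in>UNIV. \<bar>lam $ i\<bar>) \<le> (r0max + ln nA) / ((1 - \<gamma>) * \<xi>)}"

definition pos_part :: "real ^ 'm::finite \<Rightarrow> real ^ 'm" where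
  "pos_part x = (\<chi> i. max 0 (x $ i))"

end

theory Submission
  imports Defs
begin

text \<open>The dual function is the pointwise supremum of the maps \<open>\<lambda>' \<mapsto> L\<^sub>\<tau>(\<pi>, \<lambda>')\<close>,
  which are affine with slope \<open>V\<^sup>\<pi>(\<rho>) - c\<close>. For the maximizer \<open>\<pi>\<^sub>\<lambda>\<close> this affine map lies
  below \<open>d\<^sub>\<tau>\<close> and touches it at \<open>\<lambda>\<close>; since the only supporting slope of a function
  differentiable at \<open>\<lambda>\<close> is its gradient, \<open>\<nabla>d\<^sub>\<tau>(\<lambda>) = V\<^sup>\<pi>\<^sup>\<lambda>(\<rho>) - c\<close>, which gives the
  second claim. The first is \<open>L\<^sub>\<tau>(\<pi>\<^sup>*, \<lambda>) \<le> L\<^sub>\<tau>(\<pi>\<^sub>\<lambda>, \<lambda>)\<close> with the nonnegative terms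
  \<open>\<langle>\<lambda>, V\<^sup>\<pi>\<^sup>*(\<rho>) - c\<rangle>\<close> and \<open>\<tau> H(\<pi>\<^sup>*)\<close> dropped.\<close>

lemma gderiv_unique_supporting_slope:
  fixes f :: "'v::real_inner \<Rightarrow> real"
  assumes "GDERIV f x :> g" and supporting: "\<And>y. f x + inner s (y - x) \<le> f y"
  shows "g = s"
proof -
  have "((\<lambda>y. f y - inner s (y - x)) has_derivative (\<lambda>h. inner h g - inner s h)) (at x)"
    using assms(1) unfolding gderiv_def by (auto intro!: derivative_eq_intros)
  moreover have "\<forall>\<^sub>F y in at x. f x - inner s (x - x) \<le> f y - inner s (y - x)"
    using supporting by (simp add: algebra_simps)
  ultimately have "(\<lambda>h. inner h g - inner s h) = (\<lambda>h. 0)"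
    by (rule has_derivative_local_min)
  hence "inner (g - s) g - inner s (g - s) = 0" by metis
  hence "inner (g - s) (g - s) = 0" by (simp add: algebra_simps inner_commute)
  thus ?thesis by simp
qed

lemma is_dist_le_one:
  assumes "is_dist q" shows "q x \<le> 1"
proof -
  have "q x \<le> (\<Sum>y\<in>UNIV. q y)"
    using assms by (intro member_le_sum) (auto simp: is_dist_def)
  thus ?thesis using assms by (simp add: is_dist_def)
qed

lemma sdist_is_dist:
  assumes P: "\<forall>s a. is_dist (P s a)" and rho: "is_dist rho" and p: "p \<in> policies"
  shows "is_dist (sdist P rho p t)"
proof (induction t)
  case 0
  then show ?case using rho by simp
next
  case (Suc t)
  let ?d = "sdist P rho p t"
  have p_dist: "\<And>s. is_dist (p s)" using p by (simp add: policies_def)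
  have "(\<Sum>s'\<in>UNIV. sdist P rho p (Suc t) s') =
      (\<Sum>s\<in>UNIV. \<Sum>a\<in>UNIV. \<Sum>s'\<in>UNIV. ?d s * p s a * P s a s')"
  proof -
    have "(\<Sum>s'\<in>UNIV. sdist P rho p (Suc t) s') =
        (\<Sum>s'\<in>UNIV. \<Sum>s\<in>UNIV. \<Sum>a\<in>UNIV. ?d s * p s a * P s a s')" by simp
    also have "\<dots> = (\<Sum>s\<in>UNIV. \<Sum>s'\<in>UNIV. \<Sum>a\<in>UNIV. ?d s * p s a * P s a s')"
      by (rule sum.swap)
    also have "\<dots> = (\<Sum>s\<in>UNIV. \<Sum>a\<in>UNIV. \<Sum>s'\<in>UNIV. ?d s * p s a * P s a s')"
      by (intro sum.cong refl sum.swap)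
    finally show ?thesis .
  qed
  also have "\<dots> = (\<Sum>s\<in>UNIV. ?d s * (\<Sum>a\<in>UNIV. p s a))"
    using P by (simp add: is_dist_def flip: sum_distrib_left)
  also have "\<dots> = 1" using p_dist Suc by (simp add: is_dist_def)
  finally show ?case
    using Suc P p_dist by (auto simp: is_dist_def intro!: sum_nonneg)
qed

lemma abs_dist_weighted_sum_le:
  fixes d :: "'s::finite \<Rightarrow> real" and q :: "'s \<Rightarrow> 'a::finite \<Rightarrow> real"
  assumes d: "is_dist d" and q: "\<And>s. \<bar>\<Sum>a\<in>UNIV. q s a\<bar> \<le> M"
  shows "\<bar>\<Sum>s\<in>UNIV. \<Sum>a\<in>UNIV. d s * q s a\<bar> \<le> M"
proof -
  have "\<bar>\<Sum>s\<in>UNIV. \<Sum>a\<in>UNIV. d s * q s a\<bar> \<le> (\<Sum>s\<in>UNIV. \<bar>d s * (\<Sum>a\<in>UNIV. q s a)\<bar>)"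
    by (simp add: sum_distrib_left sum_abs)
  also have "\<dots> \<le> (\<Sum>s\<in>UNIV. d s * M)"
    using d q by (intro sum_mono) (auto simp: is_dist_def abs_mult intro: mult_left_mono)
  also have "\<dots> = M" using d by (simp add: is_dist_def flip: sum_distrib_right)
  finally show ?thesis .
qed

lemma discounted_series_bounded:
  fixes x :: "nat \<Rightarrow> real"
  assumes \<gamma>: "0 < \<gamma>" "\<gamma> < 1" and x: "\<And>t. \<bar>x t\<bar> \<le> M"
  shows "summable (\<lambda>t. \<gamma>^t * x t)" and "\<bar>\<Sum>t. \<gamma>^t * x t\<bar> \<le> M / (1 - \<gamma>)"
proof -
  have geometric: "summable (\<lambda>t. M * \<gamma>^t)" using \<gamma> by simp
  have dominated: "norm (\<gamma>^t * x t) \<le> M * \<gamma>^t" for t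
    using x \<gamma> by (simp add: abs_mult mult.commute mult_left_mono)
  show "summable (\<lambda>t. \<gamma>^t * x t)"
    by (rule summable_comparison_test[OF _ geometric]) (use dominated in auto)
  have abs_summable: "summable (\<lambda>t. \<bar>\<gamma>^t * x t\<bar>)"
    by (rule summable_comparison_test[OF _ geometric]) (use dominated in auto)
  have "\<bar>\<Sum>t. \<gamma>^t * x t\<bar> \<le> (\<Sum>t. \<bar>\<gamma>^t * x t\<bar>)" by (rule summable_rabs[OF abs_summable])
  also have "\<dots> \<le> (\<Sum>t. M * \<gamma>^t)"
    using dominated abs_summable geometric by (intro suminf_le) auto
  also have "\<dots> = M / (1 - \<gamma>)" using \<gamma> by (simp add: suminf_mult suminf_geometric)
  finally show "\<bar>\<Sum>t. \<gamma>^t * x t\<bar> \<le> M / (1 - \<gamma>)" .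
qed

lemma
  fixes P :: "'s::finite \<Rightarrow> 'a::finite \<Rightarrow> 's \<Rightarrow> real"
  assumes P: "\<forall>s a. is_dist (P s a)" and rho: "is_dist rho" and p: "p \<in> policies"
    and \<gamma>: "0 < \<gamma>" "\<gamma> < 1" and per_state: "\<And>s. \<bar>\<Sum>a\<in>UNIV. p s a * f s a\<bar> \<le> M"
  shows Vf_summable: "summable (\<lambda>t. \<gamma> ^ t * (\<Sum>s\<in>UNIV. \<Sum>a\<in>UNIV. sdist P rho p t s * p s a * f s a))"
    and Vf_abs_le: "\<bar>Vf P rho \<gamma> p f\<bar> \<le> M / (1 - \<gamma>)"
proof -
  have step_bound: "\<bar>\<Sum>s\<in>UNIV. \<Sum>a\<in>UNIV. sdist P rho p t s * p s a * f s a\<bar> \<le> M" for t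
    using abs_dist_weighted_sum_le[OF sdist_is_dist[OF P rho p] per_state]
    by (simp add: mult.assoc)
  show "summable (\<lambda>t. \<gamma> ^ t * (\<Sum>s\<in>UNIV. \<Sum>a\<in>UNIV. sdist P rho p t s * p s a * f s a))"
    by (rule discounted_series_bounded(1)[OF \<gamma> step_bound])
  show "\<bar>Vf P rho \<gamma> p f\<bar> \<le> M / (1 - \<gamma>)"
    unfolding Vf_def by (rule discounted_series_bounded(2)[OF \<gamma> step_bound])
qed

lemma Vf_abs_le_sum_abs:
  fixes P :: "'s::finite \<Rightarrow> 'a::finite \<Rightarrow> 's \<Rightarrow> real"
  assumes P: "\<forall>s a. is_dist (P s a)" and rho: "is_dist rho" and p: "p \<in> policies"
    and \<gamma>: "0 < \<gamma>" "\<gamma> < 1"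
  shows "\<bar>Vf P rho \<gamma> p f\<bar> \<le> (\<Sum>s\<in>UNIV. \<Sum>a\<in>UNIV. \<bar>f s a\<bar>) / (1 - \<gamma>)"
proof (rule Vf_abs_le[OF P rho p \<gamma>])
  fix s
  have p_dist: "is_dist (p s)" using p by (simp add: policies_def)
  have "\<bar>\<Sum>a\<in>UNIV. p s a * f s a\<bar> \<le> (\<Sum>a\<in>UNIV. \<bar>p s a * f s a\<bar>)" by (rule sum_abs)
  also have "\<dots> \<le> (\<Sum>a\<in>UNIV. \<bar>f s a\<bar>)"
    using p_dist is_dist_le_one[OF p_dist]
    by (intro sum_mono) (auto simp: abs_mult is_dist_def intro!: mult_left_le_one_le)
  also have "\<dots> \<le> (\<Sum>s\<in>UNIV. \<Sum>a\<in>UNIV. \<bar>f s a\<bar>)" by (rule member_le_sum) (auto intro: sum_nonneg)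
  finally show "\<bar>\<Sum>a\<in>UNIV. p s a * f s a\<bar> \<le> (\<Sum>s\<in>UNIV. \<Sum>a\<in>UNIV. \<bar>f s a\<bar>)" .
qed

lemma entropy_eq_minus_Vf_ln: "entropy P rho \<gamma> p = - Vf P rho \<gamma> p (\<lambda>s a. ln (p s a))"
  by (simp add: entropy_def Vf_def)

lemma x_ln_x_nonpos:
  fixes x :: real assumes "0 \<le> x" "x \<le> 1" shows "x * ln x \<le> 0"
  using assms by (cases "x = 0") (auto intro: mult_nonneg_nonpos)

lemma abs_x_ln_x_le_one:
  fixes x :: real assumes "0 \<le> x" "x \<le> 1" shows "\<bar>x * ln x\<bar> \<le> 1"
proof (cases "x = 0")
  case False
  hence "0 < x" using assms by simp
  have "ln (1/x) \<le> 1/x - 1" using \<open>0 < x\<close> by (intro ln_le_minus_one) simp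
  hence "- x * ln x \<le> 1 - x" using \<open>0 < x\<close> by (simp add: ln_div field_simps)
  thus ?thesis using x_ln_x_nonpos[OF assms] assms by linarith
qed simp

lemma
  fixes P :: "'s::finite \<Rightarrow> 'a::finite \<Rightarrow> 's \<Rightarrow> real"
  assumes P: "\<forall>s a. is_dist (P s a)" and rho: "is_dist rho" and p: "p \<in> policies"
    and \<gamma>: "0 < \<gamma>" "\<gamma> < 1"
  shows entropy_abs_le: "\<bar>entropy P rho \<gamma> p\<bar> \<le> real CARD('a) / (1 - \<gamma>)"
    and entropy_nonneg: "0 \<le> entropy P rho \<gamma> p"
proof -
  have p_dist: "\<And>s. is_dist (p s)" using p by (simp add: policies_def)
  have per_state: "\<bar>\<Sum>a\<in>UNIV. p s a * ln (p s a)\<bar> \<le> real CARD('a)" for s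
  proof -
    have "\<bar>\<Sum>a\<in>UNIV. p s a * ln (p s a)\<bar> \<le> (\<Sum>a\<in>UNIV. \<bar>p s a * ln (p s a)\<bar>)" by (rule sum_abs)
    also have "\<dots> \<le> (\<Sum>a\<in>(UNIV::'a set). 1)"
      using p_dist[of s] is_dist_le_one[OF p_dist]
      by (intro sum_mono abs_x_ln_x_le_one) (auto simp: is_dist_def)
    finally show ?thesis by simp
  qed
  show "\<bar>entropy P rho \<gamma> p\<bar> \<le> real CARD('a) / (1 - \<gamma>)"
    using Vf_abs_le[OF P rho p \<gamma> per_state] by (simp add: entropy_eq_minus_Vf_ln)
  have "\<gamma> ^ t * (\<Sum>s\<in>UNIV. \<Sum>a\<in>UNIV. sdist P rho p t s * p s a * ln (p s a)) \<le> 0" for t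
  proof -
    have "sdist P rho p t s * (p s a * ln (p s a)) \<le> 0" for s a
      using sdist_is_dist[OF P rho p, of t] p_dist[of s] is_dist_le_one[OF p_dist]
      by (intro mult_nonneg_nonpos x_ln_x_nonpos) (auto simp: is_dist_def)
    hence "(\<Sum>s\<in>UNIV. \<Sum>a\<in>UNIV. sdist P rho p t s * p s a * ln (p s a)) \<le> 0"
      by (intro sum_nonpos) (simp add: mult.assoc)
    thus ?thesis using \<gamma> by (simp add: mult_nonneg_nonpos)
  qed
  hence "Vf P rho \<gamma> p (\<lambda>s a. ln (p s a)) \<le> (\<Sum>t. 0)"
    unfolding Vf_def using Vf_summable[OF P rho p \<gamma> per_state] by (intro suminf_le) auto
  thus "0 \<le> entropy P rho \<gamma> p" by (simp add: entropy_eq_minus_Vf_ln)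
qed

lemma Lagr_bdd_above:
  fixes P :: "'s::finite \<Rightarrow> 'a::finite \<Rightarrow> 's \<Rightarrow> real"
    and r :: "'m::finite \<Rightarrow> 's \<Rightarrow> 'a \<Rightarrow> real"
  assumes P: "\<forall>s a. is_dist (P s a)" and rho: "is_dist rho" and \<gamma>: "0 < \<gamma>" "\<gamma> < 1"
  shows "bdd_above ((\<lambda>p. Lagr P rho \<gamma> r0 r c \<tau> p lam) ` policies)"
proof (rule bdd_aboveI2)
  let ?B = "\<lambda>f::'s \<Rightarrow> 'a \<Rightarrow> real. (\<Sum>s\<in>UNIV. \<Sum>a\<in>UNIV. \<bar>f s a\<bar>) / (1 - \<gamma>)"
  fix p :: "'s \<Rightarrow> 'a \<Rightarrow> real" assume p: "p \<in> policies"
  note Vf_bound = Vf_abs_le_sum_abs[OF P rho p \<gamma>]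
  have "\<bar>lam \<bullet> (Vvec P rho \<gamma> r p - c)\<bar> \<le> norm lam * norm (Vvec P rho \<gamma> r p - c)"
    by (rule Cauchy_Schwarz_ineq2)
  also have "\<dots> \<le> norm lam * (\<Sum>i\<in>UNIV. ?B (r i) + \<bar>c $ i\<bar>)"
  proof (intro mult_left_mono order.trans[OF norm_le_l1_cart] sum_mono)
    fix i
    show "\<bar>(Vvec P rho \<gamma> r p - c) $ i\<bar> \<le> ?B (r i) + \<bar>c $ i\<bar>"
      using Vf_bound[of "r i"] by (simp add: Vvec_def)
  qed simp
  finally have multiplier_term:
      "lam \<bullet> (Vvec P rho \<gamma> r p - c) \<le> norm lam * (\<Sum>i\<in>UNIV. ?B (r i) + \<bar>c $ i\<bar>)"
    by linarith
  have "\<tau> * entropy P rho \<gamma> p \<le> \<bar>\<tau>\<bar> * \<bar>entropy P rho \<gamma> p\<bar>" by (metis abs_ge_self abs_mult)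
  also have "\<dots> \<le> \<bar>\<tau>\<bar> * (real CARD('a) / (1 - \<gamma>))"
    using entropy_abs_le[OF P rho p \<gamma>] by (intro mult_left_mono) auto
  finally have entropy_term: "\<tau> * entropy P rho \<gamma> p \<le> \<bar>\<tau>\<bar> * (real CARD('a) / (1 - \<gamma>))" .
  show "Lagr P rho \<gamma> r0 r c \<tau> p lam \<le>
      ?B r0 + norm lam * (\<Sum>i\<in>UNIV. ?B (r i) + \<bar>c $ i\<bar>) + \<bar>\<tau>\<bar> * (real CARD('a) / (1 - \<gamma>))"
    unfolding Lagr_def using Vf_bound[of r0] multiplier_term entropy_term by linarith
qed

lemma dual_eq_Lagr_maximizer:
  assumes "is_Lmax P rho \<gamma> r0 r c \<tau> lam p"
  shows "dual P rho \<gamma> r0 r c \<tau> lam = Lagr P rho \<gamma> r0 r c \<tau> p lam"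
  using assms unfolding dual_def is_Lmax_def by (intro cSup_eq_maximum) auto

lemma Lagr_le_dual:
  fixes P :: "'s::finite \<Rightarrow> 'a::finite \<Rightarrow> 's \<Rightarrow> real"
  assumes P: "\<forall>s a. is_dist (P s a)" and rho: "is_dist rho" and \<gamma>: "0 < \<gamma>" "\<gamma> < 1"
    and p: "p \<in> policies"
  shows "Lagr P rho \<gamma> r0 r c \<tau> p lam \<le> dual P rho \<gamma> r0 r c \<tau> lam"
  unfolding dual_def by (rule cSUP_upper[OF p Lagr_bdd_above[OF P rho \<gamma>]])

lemma Lagr_affine_multiplier:
  "Lagr P rho \<gamma> r0 r c \<tau> p lam' =
     Lagr P rho \<gamma> r0 r c \<tau> p lam + inner (Vvec P rho \<gamma> r p - c) (lam' - lam)"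
  unfolding Lagr_def by (simp add: inner_diff_right inner_commute[of "Vvec P rho \<gamma> r p - c"])

lemma gderiv_dual_eq:
  fixes P :: "'s::finite \<Rightarrow> 'a::finite \<Rightarrow> 's \<Rightarrow> real"
  assumes P: "\<forall>s a. is_dist (P s a)" and rho: "is_dist rho" and \<gamma>: "0 < \<gamma>" "\<gamma> < 1"
    and max: "is_Lmax P rho \<gamma> r0 r c \<tau> lam p"
    and grad: "GDERIV (dual P rho \<gamma> r0 r c \<tau>) lam :> g"
  shows "g = Vvec P rho \<gamma> r p - c"
proof (rule gderiv_unique_supporting_slope[OF grad])
  fix lam'
  have "p \<in> policies" using max by (simp add: is_Lmax_def)
  then have "Lagr P rho \<gamma> r0 r c \<tau> p lam' \<le> dual P rho \<gamma> r0 r c \<tau> lam'"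
    by (rule Lagr_le_dual[OF P rho \<gamma>])
  then show "dual P rho \<gamma> r0 r c \<tau> lam + inner (Vvec P rho \<gamma> r p - c) (lam' - lam)
      \<le> dual P rho \<gamma> r0 r c \<tau> lam'"
    using Lagr_affine_multiplier[of P rho \<gamma> r0 r c \<tau> p lam' lam] dual_eq_Lagr_maximizer[OF max]
    by linarith
qed

lemma feasible_value_gap_le:
  fixes P :: "'s::finite \<Rightarrow> 'a::finite \<Rightarrow> 's \<Rightarrow> real"
  assumes P: "\<forall>s a. is_dist (P s a)" and rho: "is_dist rho" and \<gamma>: "0 < \<gamma>" "\<gamma> < 1"
    and \<tau>: "0 \<le> \<tau>" and lam: "\<And>i. 0 \<le> lam $ i"
    and feas: "feasible P rho \<gamma> r c q"
    and max: "is_Lmax P rho \<gamma> r0 r c \<tau> lam p"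
  shows "Vf P rho \<gamma> q r0 - Vf P rho \<gamma> p r0 \<le> lam \<bullet> (Vvec P rho \<gamma> r p - c) + \<tau> * entropy P rho \<gamma> p"
proof -
  have q: "q \<in> policies" using feas by (simp add: feasible_def)
  have "0 \<le> lam \<bullet> (Vvec P rho \<gamma> r q - c)"
    using feas lam unfolding inner_vec_def feasible_def by (intro sum_nonneg) simp
  moreover have "0 \<le> \<tau> * entropy P rho \<gamma> q"
    using \<tau> entropy_nonneg[OF P rho q \<gamma>] by simp
  moreover have "Lagr P rho \<gamma> r0 r c \<tau> q lam \<le> Lagr P rho \<gamma> r0 r c \<tau> p lam"
    using max q by (simp add: is_Lmax_def)
  ultimately show ?thesis unfolding Lagr_def by linarith
qed

theorem lemma6:
  fixes P :: "'s::finite \<Rightarrow> 'a::finite \<Rightarrow> 's \<Rightarrow> real"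
    and rho :: "'s \<Rightarrow> real"
    and \<gamma> \<tau> \<xi> :: real
    and r0 :: "'s \<Rightarrow> 'a \<Rightarrow> real"
    and r :: "'m::finite \<Rightarrow> 's \<Rightarrow> 'a \<Rightarrow> real"
    and c lam g :: "real ^ 'm"
    and pistar pi_l pi_xi :: "'s \<Rightarrow> 'a \<Rightarrow> real"
  defines "\<Lambda> \<equiv> Lam (Max (range (\<lambda>(s, a). r0 s a))) (real CARD('a)) \<gamma> \<xi> :: (real ^ 'm) set"
  assumes P: "\<forall>s a. is_dist (P s a)"
    and rho: "is_dist rho"
    and gamma: "0 < \<gamma>" "\<gamma> < 1"
    and r0_pos: "\<forall>s a. 0 < r0 s a"
    and r_pos: "\<forall>i s a. 0 < r i s a"
    and tau: "0 < \<tau>"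
    and slater: "0 < \<xi>" "pi_xi \<in> policies"
                "\<forall>i. Vvec P rho \<gamma> r pi_xi $ i \<ge> c $ i + \<xi>"
    and uniq: "\<forall>l\<in>\<Lambda>. \<exists>!p. is_Lmax P rho \<gamma> r0 r c \<tau> l p"
    and opt: "feasible P rho \<gamma> r c pistar"
             "\<forall>p. feasible P rho \<gamma> r c p \<longrightarrow> Vf P rho \<gamma> p r0 \<le> Vf P rho \<gamma> pistar r0"
    and lam: "lam \<in> \<Lambda>"
    and pil: "is_Lmax P rho \<gamma> r0 r c \<tau> lam pi_l"
    and grad: "GDERIV (dual P rho \<gamma> r0 r c \<tau>) lam :> g"
  shows "Vf P rho \<gamma> pistar r0 - Vf P rho \<gamma> pi_l r0 \<le> lam \<bullet> g + \<tau> * entropy P rho \<gamma> pi_l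
       \<and> norm (pos_part (c - Vvec P rho \<gamma> r pi_l)) = norm (pos_part (- g))"
proof -
  have g_eq: "g = Vvec P rho \<gamma> r pi_l - c"
    by (rule gderiv_dual_eq[OF P rho gamma pil grad])
  have "\<And>i. 0 \<le> lam $ i" using lam by (simp add: \<Lambda>_def Lam_def)
  from feasible_value_gap_le[OF P rho gamma less_imp_le[OF tau] this opt(1) pil]
  show ?thesis unfolding g_eq by simp
qed

end
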